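(* Fix an instance of MCND and a partial aggregation $\mathcal{B}$ (see context). (i) Every feasible solution $(x,y)$ of the LP relaxation of the PAi formulation built on $\mathcal{B}$ is a feasible solution of the LP relaxation of the PA formulation built on the same $\mathcal{B}$. (ii) There exist an instance and a partial aggregation $\mathcal{B}$ for which the LP relaxation of PA has a feasible solution that is not feasible for the LP relaxation of PAi. (That is, PAi is stronger than PA.)
   Context: An instance of MCND consists of a directed graph $G=(\mathcal{N},\mathcal{A})$, a finite set $\mathcal{K}$ of commodities, each $k\in\mathcal{K}$ having an origin $o^k\in\mathcal{N}$, a destination $s^k\in\mathcal{N}$ and a demand $d^k\ge 0$, and for each arc $(i,j)\in\mathcal{A}$ a capacity $u_{ij}$, a per-unit flow cost $c_{ij}$ and a fixed cost $f_{ij}$, all nonnegative. Let $o_i^k=1$ if $i=o^k$ and $0$ otherwise, $s_i^k=1$ if $i=s^k$ and $0$ otherwise, $\mathcal{N}_i^+=\{j:(i,j)\in\mathcal{A}\}$, $\mathcal{N}_i^-=\{j:(j,i)\in\mathcal{A}\}$. Dispersion: a nonempty set $\mathcal{K}_b\subseteq\mathcal{K}$ of commodities sharing a common origin, together with, for every arc $(i,j)\in\mathcal{A}$, a partition of $\mathcal{K}_b$ into $\mathcal{K}_b^{ij}$ (aggregated on $(i,j)$) and $\mathcal{D}_b^{ij}$ (disaggregated on $(i,j)$); either part may be empty. Let $\mathcal{G}_b^{ij}$ be the family consisting of the set $\mathcal{K}_b^{ij}$ (if nonempty) together with the singletons $\{k\}$, $k\in\mathcal{D}_b^{ij}$. A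 partial aggregation is a set $\mathcal{B}$ of dispersions such that every $k\in\mathcal{K}$ lies in $\mathcal{K}_b$ for exactly one $b\in\mathcal{B}$. LP relaxation of PA (for $\mathcal{B}$): variables $x_{ij}^D\ge0$ for $(i,j)\in\mathcal{A}$, $b\in\mathcal{B}$, $D\in\mathcal{G}_b^{ij}$ (since the $\mathcal{K}_b$ are disjoint, $D$ determines $b$), and $0\le y_{ij}\le1$; minimize $\sum_{(i,j)}c_{ij}\sum_{b}\sum_{D\in\mathcal{G}_b^{ij}}x_{ij}^D+\sum_{(i,j)}f_{ij}y_{ij}$ subject to: for all $b\in\mathcal{B}$, $i\in\mathcal{N}$: $\sum_{j\in\mathcal{N}_i^+}\sum_{D\in\mathcal{G}_b^{ij}}x_{ij}^D-\sum_{j\in\mathcal{N}_i^-}\sum_{D\in\mathcal{G}_b^{ji}}x_{ji}^D=\sum_{k\in\mathcal{K}_b}(o_i^k-s_i^k)d^k$; for all $(i,j)$: $\sum_b\sum_{D\in\mathcal{G}_b^{ij}}x_{ij}^D\le u_{ij}y_{ij}$; for all $(i,j),b,D\in\mathcal{G}_b^{ij}$: $x_{ij}^D\le(\sum_{k\in D}d^k)y_{ij}$. LP relaxation of PAi: the PA LP plus, for all $b\in\mathcal{B}$, $k\in\mathcal{K}_b$, $i\in\mathcal{N}$: $\sum_{j\in\mathcal{N}_i^+}\sum_{D\in\mathcal{G}_b^{ij}:k\in D}x_{ij}^D-\sum_{j\in\mathcal{N}_i^-}\sum_{D\in\mathcal{G}_b^{ji}:D=\{k\}}x_{ji}^D\ge(o_i^k-s_i^k)d^k$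 and $\sum_{j\in\mathcal{N}_i^+}\sum_{D\in\mathcal{G}_b^{ij}:D=\{k\}}x_{ij}^D-\sum_{j\in\mathcal{N}_i^-}\sum_{D\in\mathcal{G}_b^{ji}:k\in D}x_{ji}^D\le(o_i^k-s_i^k)d^k$. *)

theory Defs
  imports Complex_Main
begin

record mcnd =
  nodes :: "nat set"
  arcs  :: "(nat \<times> nat) set"
  comms :: "nat set"
  orig  :: "nat \<Rightarrow> nat"
  dest  :: "nat \<Rightarrow> nat"
  dem   :: "nat \<Rightarrow> real"
  cap   :: "nat \<times> nat \<Rightarrow> real"
  ucost :: "nat \<times> nat \<Rightarrow> real"
  fcost :: "nat \<times> nat \<Rightarrow> real"

definition valid_instance :: "mcnd \<Rightarrow> bool" where
  "valid_instance I \<longleftrightarrow>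
     finite (nodes I) \<and> finite (arcs I) \<and> arcs I \<subseteq> nodes I \<times> nodes I \<and> finite (comms I) \<and>
     (\<forall>k\<in>comms I. orig I k \<in> nodes I \<and> dest I k \<in> nodes I \<and> dem I k \<ge> 0) \<and>
     (\<forall>a\<in>arcs I. cap I a \<ge> 0 \<and> ucost I a \<ge> 0 \<and> fcost I a \<ge> 0)"

definition outN :: "mcnd \<Rightarrow> nat \<Rightarrow> nat set" where
  "outN I i = {j. (i, j) \<in> arcs I}"

definition inN :: "mcnd \<Rightarrow> nat \<Rightarrow> nat set" where
  "inN I i = {j. (j, i) \<in> arcs I}"

text \<open>A dispersion: commodity set K_b and, for every arc, the aggregated part K_b^{ij};
  the disaggregated part D_b^{ij} is the complement K_b - K_b^{ij}.\<close>

record disp =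
  dK   :: "nat set"
  dAgg :: "nat \<times> nat \<Rightarrow> nat set"

definition is_dispersion :: "mcnd \<Rightarrow> disp \<Rightarrow> bool" where
  "is_dispersion I b \<longleftrightarrow>
     dK b \<noteq> {} \<and> dK b \<subseteq> comms I \<and>
     (\<exists>v. \<forall>k\<in>dK b. orig I k = v) \<and>
     (\<forall>a\<in>arcs I. dAgg b a \<subseteq> dK b)"

definition disagg :: "disp \<Rightarrow> nat \<times> nat \<Rightarrow> nat set" where
  "disagg b a = dK b - dAgg b a"

definition groups :: "disp \<Rightarrow> nat \<times> nat \<Rightarrow> nat set set" where
  "groups b a = (if dAgg b a = {} then {} else {dAgg b a}) \<union> (\<lambda>k. {k}) ` disagg b a"

definition partial_aggregation :: "mcnd \<Rightarrow> disp set \<Rightarrow> bool" where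
  "partial_aggregation I B \<longleftrightarrow>
     finite B \<and> (\<forall>b\<in>B. is_dispersion I b) \<and> (\<forall>k\<in>comms I. \<exists>!b. b \<in> B \<and> k \<in> dK b)"

definition flow :: "((nat \<times> nat) \<Rightarrow> nat set \<Rightarrow> real) \<Rightarrow> disp \<Rightarrow> nat \<times> nat \<Rightarrow> real" where
  "flow x b a = (\<Sum>D\<in>groups b a. x a D)"

definition net :: "mcnd \<Rightarrow> nat \<Rightarrow> nat \<Rightarrow> real" where
  "net I k i = ((if i = orig I k then 1 else 0) - (if i = dest I k then 1 else 0)) * dem I k"

text \<open>Feasibility for the LP relaxation of PA. Variables: x a D for arcs a and
  D in groups b a (values at other indices are irrelevant), and y a.\<close>
definition PA_feasible ::
  "mcnd \<Rightarrow> disp set \<Rightarrow> ((nat \<times> nat) \<Rightarrow> nat set \<Rightarrow> real) \<Rightarrow> (nat \<times> nat \<Rightarrow> real) \<Rightarrow> bool" where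
  "PA_feasible I B x y \<longleftrightarrow>
     (\<forall>a\<in>arcs I. 0 \<le> y a \<and> y a \<le> 1) \<and>
     (\<forall>a\<in>arcs I. \<forall>b\<in>B. \<forall>D\<in>groups b a. 0 \<le> x a D) \<and>
     (\<forall>b\<in>B. \<forall>i\<in>nodes I.
        (\<Sum>j\<in>outN I i. flow x b (i, j)) - (\<Sum>j\<in>inN I i. flow x b (j, i))
          = (\<Sum>k\<in>dK b. net I k i)) \<and>
     (\<forall>a\<in>arcs I. (\<Sum>b\<in>B. flow x b a) \<le> cap I a * y a) \<and>
     (\<forall>a\<in>arcs I. \<forall>b\<in>B. \<forall>D\<in>groups b a. x a D \<le> (\<Sum>k\<in>D. dem I k) * y a)"

definition PAi_feasible ::
  "mcnd \<Rightarrow> disp set \<Rightarrow> ((nat \<times> nat) \<Rightarrow> nat set \<Rightarrow> real) \<Rightarrow> (nat \<times> nat \<Rightarrow> real) \<Rightarrow> bool" where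
  "PAi_feasible I B x y \<longleftrightarrow>
     PA_feasible I B x y \<and>
     (\<forall>b\<in>B. \<forall>k\<in>dK b. \<forall>i\<in>nodes I.
        (\<Sum>j\<in>outN I i. \<Sum>D\<in>{D\<in>groups b (i, j). k \<in> D}. x (i, j) D)
          - (\<Sum>j\<in>inN I i. \<Sum>D\<in>{D\<in>groups b (j, i). D = {k}}. x (j, i) D)
          \<ge> net I k i \<and>
        (\<Sum>j\<in>outN I i. \<Sum>D\<in>{D\<in>groups b (i, j). D = {k}}. x (i, j) D)
          - (\<Sum>j\<in>inN I i. \<Sum>D\<in>{D\<in>groups b (j, i). k \<in> D}. x (j, i) D)
          \<le> net I k i)"

end

theory Submission
  imports Defs
begin

text \<open>Part (i) holds because PAi only adds constraints to PA. For part (ii), take the path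
  0 \<rightarrow> 1 \<rightarrow> 2 and two unit commodities from node 0, commodity 0 to node 1 and commodity 1
  to node 2, aggregated on arc (0,1) and disaggregated on arc (1,2). Sending both units
  over (0,1) and then one unit labelled as commodity 0 over (1,2) satisfies the aggregated
  flow conservation, but commodity 0 then reaches node 2, which violates its PAi
  inequality at node 2.\<close>

lemma PAi_feasible_imp_PA_feasible: "PAi_feasible I B x y \<Longrightarrow> PA_feasible I B x y"
  by (simp add: PAi_feasible_def)

definition path_instance :: mcnd where
  "path_instance = \<lparr>nodes = {0,1,2}, arcs = {(0,1),(1,2)}, comms = {0,1}, orig = (\<lambda>_. 0),
     dest = (\<lambda>k. if k = 0 then 1 else 2), dem = (\<lambda>_. 1), cap = (\<lambda>_. 2),
     ucost = (\<lambda>_. 0), fcost = (\<lambda>_. 0)\<rparr>"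

definition path_dispersion :: disp where
  "path_dispersion = \<lparr>dK = {0,1}, dAgg = (\<lambda>a. if a = (0,1) then {0,1} else {})\<rparr>"

definition mislabelled_flow :: "(nat \<times> nat) \<Rightarrow> nat set \<Rightarrow> real" where
  "mislabelled_flow a D = (if a = (0,1) then 2 else if D = {0} then 1 else 0)"

lemma path_instance_simps [simp]:
  "nodes path_instance = {0,1,2}" "arcs path_instance = {(0,1),(1,2)}"
  "comms path_instance = {0,1}" "orig path_instance = (\<lambda>_. 0)"
  "dest path_instance = (\<lambda>k. if k = 0 then 1 else 2)" "dem path_instance = (\<lambda>_. 1)"
  "cap path_instance = (\<lambda>_. 2)"
  by (simp_all add: path_instance_def)

text \<open>Stated with \<open>Suc 0\<close> rather than \<open>1\<close>: that is the form in which node 1 occurs in the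
  simplified feasibility goals.\<close>

lemma path_neighbours [simp]:
  "outN path_instance 0 = {Suc 0}" "outN path_instance (Suc 0) = {2}" "outN path_instance 2 = {}"
  "inN path_instance 0 = {}" "inN path_instance (Suc 0) = {0}" "inN path_instance 2 = {Suc 0}"
  by (auto simp: outN_def inN_def)

lemma path_dispersion_groups [simp]:
  "dK path_dispersion = {0,1}"
  "groups path_dispersion (0, Suc 0) = {{0, Suc 0}}"
  "groups path_dispersion (Suc 0, 2) = {{0}, {Suc 0}}"
  by (auto simp: groups_def path_dispersion_def disagg_def)

lemma valid_path_instance: "valid_instance path_instance"
  by (simp add: valid_instance_def path_instance_def)

lemma partial_aggregation_path: "partial_aggregation path_instance {path_dispersion}"
  by (auto simp: partial_aggregation_def is_dispersion_def path_dispersion_def)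

lemma PA_feasible_mislabelled_flow: "PA_feasible path_instance {path_dispersion} mislabelled_flow (\<lambda>_. 1)"
  by (simp add: PA_feasible_def flow_def mislabelled_flow_def net_def)

lemma not_PAi_feasible_mislabelled_flow:
  "\<not> PAi_feasible path_instance {path_dispersion} mislabelled_flow (\<lambda>_. 1)"
proof
  assume "PAi_feasible path_instance {path_dispersion} mislabelled_flow (\<lambda>_. 1)"
  then have "net path_instance 0 2 \<le>
      - (\<Sum>D\<in>{D\<in>groups path_dispersion (1, 2). D = {0}}. mislabelled_flow (1, 2) D)"
    unfolding PAi_feasible_def by simp
  moreover have "{D\<in>groups path_dispersion (1, 2). D = {0}} = {{0}}"
    by auto
  ultimately show False
    by (simp add: mislabelled_flow_def net_def)
qed

theorem theorem3:
  shows "(\<forall>I B x y. valid_instance I \<and> partial_aggregation I B \<and> PAi_feasible I B x y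
            \<longrightarrow> PA_feasible I B x y) \<and>
         (\<exists>I B x y. valid_instance I \<and> partial_aggregation I B \<and> PA_feasible I B x y
            \<and> \<not> PAi_feasible I B x y)"
  using PAi_feasible_imp_PA_feasible valid_path_instance partial_aggregation_path
    PA_feasible_mislabelled_flow not_PAi_feasible_mislabelled_flow
  by blast

end
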